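(* Let $(M,w)$ be a pointed restricted Kripke model and $(U,s)$ a pointed atemporal action model over $L_{\mathsf{YDEL}}$ with $M,w\models_{\mathsf{YDEL}}\mathrm{pre}^U(s)$. Then the function $f:W^M\to W^{M\oplus U}$ defined by $f(v)=(v,\flat)$ is a bisimulation between $M$ and $M\oplus U$.
   Context: Fix a nonempty finite set $\mathsf{Agt}$ of agents and a nonempty set $\mathsf{Prop}$ of letters. A Kripke model (with yesterday) is $M=(W^M,(\to^M_a)_{a\in\mathsf{Agt}},\leadsto^M,V^M)$: $W^M$ a nonempty set, binary relations $\to^M_a,\leadsto^M$ on $W^M$ ($w'\leadsto w$: $w'$ is a yesterday of $w$), $V^M:\mathsf{Prop}\to\mathcal P(W^M)$. A progression is a finite nonempty sequence $x_0,\dots,x_n$ with $x_i\leadsto x_{i+1}$; a history is one not extendable at its beginning; $\mathrm{depth}(x)$ is the maximal length $n$ of a history ending at $x$ ($\infty$ if none). $M$ is restricted if: $w\leadsto w'$ implies $w\in V(p)\iff w'\in V(p)$; all depths finite; $w'\leadsto w\to_av$ implies $\exists v'\leadsto v$; $w\to_av$ and no $w'\leadsto w$ imply no $v'\leadsto v$; $w'\leadsto w$, $w''\leadsto w$ imply $w'=w''$; $w\leadsto v\to_av'$ implies $\exists w'$ with $w\to_aw'\leadsto v'$. An action model over a set of formulas $F$ is $U=(W^U,(\to^U_a)_a,\leadsto^U,\mathrm{pre}^U)$ with $W^U$ nonempty finite, binary relations, $\mathrm{pre}^U:W^U\to F$; it is atemporal if $\leadsto^U=\emptyset$. $L_{\mathsf{YDEL}}$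 is given by $\varphi::=p\mid\neg\varphi\mid\varphi\wedge\varphi\mid\Box_a\varphi\mid[Y]\varphi\mid[U,s]\varphi$ where $(U,s)$ ranges over pointed atemporal action models over $L_{\mathsf{YDEL}}$; $\flat$ is a special symbol never used as a world or event. $\mathsf{YDEL}$ semantics on pointed restricted models: Boolean standard; $M,w\models_{\mathsf{YDEL}}\Box_a\varphi$ iff $\varphi$ holds at all $v$ with $w\to^M_av$; $M,w\models_{\mathsf{YDEL}}[Y]\varphi$ iff $\varphi$ holds at all $v\leadsto^Mw$; $M,w\models_{\mathsf{YDEL}}[U,s]\varphi$ iff $M,w\models_{\mathsf{YDEL}}\mathrm{pre}^U(s)$ implies $M\oplus U,(w,s)\models_{\mathsf{YDEL}}\varphi$, where $W^{M\oplus U}=(W^M\times\{\flat\})\cup\{(v,t)\in W^M\times W^U:M,v\models_{\mathsf{YDEL}}\mathrm{pre}^U(t)\}$; $(v,t)\to_a(v',t')$ iff ($t,t'\ne\flat$, $v\to^M_av'$, $t\to^U_at'$) or ($t=t'=\flat$ and $v\to^M_av'$); $(v,t)\leadsto(v',t')$ iff ($t=\flat$, $t'\ne\flat$, $v=v'$) or ($t=t'=\flat$ and $v\leadsto^Mv'$); $(v,t)\in V(p)$ iff $v\in V^M(p)$. A bisimulation between Kripke models $M,M'$ is a nonempty relation $B\subseteq W^M\times W^{M'}$ such that $wBw'$ implies $w,w'$ satisfy the same letters, and for each relation $R$ among the $\to_a$ ($a\in\mathsf{Agt}$) and the converse of $\leadsto$ (i.e. $w\,R\,v$ iff $v\leadsto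 w$): if $wBw'$ and $wR^Mv$ then there is $v'$ with $w'R^{M'}v'$ and $vBv'$, and if $wBw'$ and $w'R^{M'}v'$ then there is $v$ with $wR^Mv$ and $vBv'$. A function is a bisimulation if its graph is. *)

theory Defs
  imports Main "HOL-Library.Extended_Nat"
begin

record ('a, 'p, 'w) kripke =
  worlds :: "'w set"
  acc    :: "'a \<Rightarrow> ('w \<times> 'w) set"
  yest   :: "('w \<times> 'w) set"          \<comment> \<open>(w',w) \<in> yest M  iff  w' \<leadsto> w (w' is a yesterday of w)\<close>
  val    :: "'p \<Rightarrow> 'w set"

definition wf_kripke :: "('a, 'p, 'w, 'z) kripke_scheme \<Rightarrow> bool" where
  "wf_kripke M \<longleftrightarrow> worlds M \<noteq> {} \<and> (\<forall>a. acc M a \<subseteq> worlds M \<times> worlds M)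
     \<and> yest M \<subseteq> worlds M \<times> worlds M \<and> (\<forall>p. val M p \<subseteq> worlds M)"

definition progression :: "('a, 'p, 'w, 'z) kripke_scheme \<Rightarrow> 'w list \<Rightarrow> bool" where
  "progression M xs \<longleftrightarrow> xs \<noteq> [] \<and> set xs \<subseteq> worlds M
     \<and> (\<forall>i. Suc i < length xs \<longrightarrow> (xs ! i, xs ! Suc i) \<in> yest M)"

definition history :: "('a, 'p, 'w, 'z) kripke_scheme \<Rightarrow> 'w list \<Rightarrow> bool" where
  "history M xs \<longleftrightarrow> progression M xs \<and> \<not> (\<exists>y\<in>worlds M. (y, hd xs) \<in> yest M)"

definition depth :: "('a, 'p, 'w, 'z) kripke_scheme \<Rightarrow> 'w \<Rightarrow> enat" where
  "depth M x =
    (if (\<exists>xs. history M xs \<and> last xs = x)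
     then Sup {enat (length xs - 1) | xs. history M xs \<and> last xs = x}
     else \<infinity>)"

definition restricted :: "('a, 'p, 'w, 'z) kripke_scheme \<Rightarrow> bool" where
  "restricted M \<longleftrightarrow> wf_kripke M
   \<and> (\<forall>w w' p. (w, w') \<in> yest M \<longrightarrow> (w \<in> val M p \<longleftrightarrow> w' \<in> val M p))
   \<and> (\<forall>x\<in>worlds M. depth M x \<noteq> \<infinity>)
   \<and> (\<forall>a w' w v. (w', w) \<in> yest M \<and> (w, v) \<in> acc M a \<longrightarrow> (\<exists>v'. (v', v) \<in> yest M))
   \<and> (\<forall>a w v. (w, v) \<in> acc M a \<and> \<not> (\<exists>w'. (w', w) \<in> yest M) \<longrightarrow> \<not> (\<exists>v'. (v', v) \<in> yest M))
   \<and> (\<forall>w w' w''. (w', w) \<in> yest M \<and> (w'', w) \<in> yest M \<longrightarrow> w' = w'')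
   \<and> (\<forall>a w v v'. (w, v) \<in> yest M \<and> (v, v') \<in> acc M a \<longrightarrow> (\<exists>w'. (w, w') \<in> acc M a \<and> (w', v') \<in> yest M))"

text \<open>Atemporal action models are represented by a nonempty list of preconditions
  (events are the indices 0..<length pres; pre(t) = pres ! t) and the accessibility
  relations on events; the yesterday relation of an atemporal action model is empty, so it
  is not stored.  The constructor Act pres R s \<phi> stands for [U,s]\<phi>.\<close>

datatype ('a, 'p) fm =
    Atom 'p
  | Neg "('a, 'p) fm"
  | Conj "('a, 'p) fm" "('a, 'p) fm"
  | Box 'a "('a, 'p) fm"
  | Yest "('a, 'p) fm"
  | Act "('a, 'p) fm list" "'a \<Rightarrow> (nat \<times> nat) set" nat "('a, 'p) fm"

fun wf_fm :: "('a, 'p) fm \<Rightarrow> bool" where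
  "wf_fm (Atom p) = True"
| "wf_fm (Neg \<phi>) = wf_fm \<phi>"
| "wf_fm (Conj \<phi> \<psi>) = (wf_fm \<phi> \<and> wf_fm \<psi>)"
| "wf_fm (Box a \<phi>) = wf_fm \<phi>"
| "wf_fm (Yest \<phi>) = wf_fm \<phi>"
| "wf_fm (Act pres R s \<phi>) = (pres \<noteq> [] \<and> s < length pres
      \<and> (\<forall>a. R a \<subseteq> {..<length pres} \<times> {..<length pres})
      \<and> (\<forall>\<psi>\<in>set pres. wf_fm \<psi>) \<and> wf_fm \<phi>)"

definition wf_action :: "('a, 'p) fm list \<Rightarrow> ('a \<Rightarrow> (nat \<times> nat) set) \<Rightarrow> nat \<Rightarrow> bool" where
  "wf_action pres R s \<longleftrightarrow> pres \<noteq> [] \<and> s < length pres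
      \<and> (\<forall>a. R a \<subseteq> {..<length pres} \<times> {..<length pres}) \<and> (\<forall>\<psi>\<in>set pres. wf_fm \<psi>)"

text \<open>Generic product M \<oplus> U, given for each event t the set T ! t of worlds satisfying pre(t).
  The world (v, None) stands for (v, \<flat>), and (v, Some t) for (v, t).\<close>

definition prod_gen :: "('a, 'p, 'w, 'z) kripke_scheme \<Rightarrow> 'w set list \<Rightarrow> ('a \<Rightarrow> (nat \<times> nat) set)
     \<Rightarrow> ('a, 'p, 'w \<times> nat option) kripke" where
  "prod_gen M T R =
    (let W = {(v, None) | v. v \<in> worlds M}
             \<union> {(v, Some t) | v t. v \<in> worlds M \<and> t < length T \<and> v \<in> T ! t}
     in \<lparr> worlds = W,
          acc = (\<lambda>a. {(x, y). x \<in> W \<and> y \<in> W \<and>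
                   ((\<exists>v v' t t'. x = (v, Some t) \<and> y = (v', Some t') \<and> (v, v') \<in> acc M a \<and> (t, t') \<in> R a)
                  \<or> (\<exists>v v'. x = (v, None) \<and> y = (v', None) \<and> (v, v') \<in> acc M a))}),
          yest = {(x, y). x \<in> W \<and> y \<in> W \<and>
                   ((\<exists>v t'. x = (v, None) \<and> y = (v, Some t'))
                  \<or> (\<exists>v v'. x = (v, None) \<and> y = (v', None) \<and> (v, v') \<in> yest M))},
          val = (\<lambda>p. {(v, t). (v, t) \<in> W \<and> v \<in> val M p}) \<rparr>)"

definition map_kripke :: "('w \<Rightarrow> 'u) \<Rightarrow> ('a, 'p, 'w, 'z) kripke_scheme \<Rightarrow> ('a, 'p, 'u) kripke" where
  "map_kripke f M = \<lparr> worlds = f ` worlds M,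
      acc = (\<lambda>a. map_prod f f ` acc M a),
      yest = map_prod f f ` yest M,
      val = (\<lambda>p. f ` val M p) \<rparr>"

text \<open>Internally, iterated products are represented with worlds of type
  'w \<times> nat option list: the world ((v, l), t) of an update is flattened to (v, l @ [t]).
  This is an isomorphic copy of the iterated product.\<close>

definition flat :: "('w \<times> nat option list) \<times> nat option \<Rightarrow> 'w \<times> nat option list" where
  "flat x = (fst (fst x), snd (fst x) @ [snd x])"

function sat_gen :: "('a, 'p, 'w \<times> nat option list) kripke \<Rightarrow> 'w \<times> nat option list \<Rightarrow> ('a, 'p) fm \<Rightarrow> bool" where
  "sat_gen M x (Atom p) = (x \<in> val M p)"
| "sat_gen M x (Neg \<phi>) = (\<not> sat_gen M x \<phi>)"
| "sat_gen M x (Conj \<phi> \<psi>) = (sat_gen M x \<phi> \<and> sat_gen M x \<psi>)"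
| "sat_gen M x (Box a \<phi>) = (\<forall>y. (x, y) \<in> acc M a \<longrightarrow> sat_gen M y \<phi>)"
| "sat_gen M x (Yest \<phi>) = (\<forall>y. (y, x) \<in> yest M \<longrightarrow> sat_gen M y \<phi>)"
| "sat_gen M x (Act pres R s \<phi>) =
     (if s < length pres then
        (sat_gen M x (pres ! s) \<longrightarrow>
           sat_gen (map_kripke flat (prod_gen M (map (\<lambda>\<psi>. {y. sat_gen M y \<psi>}) pres) R))
                   (fst x, snd x @ [Some s]) \<phi>)
      else True)"
  by pat_completeness auto

lemma size_mem_le_size_list: "x \<in> set xs \<Longrightarrow> f x \<le> size_list f xs"
  by (induction xs) auto

termination
  apply (relation "measure (\<lambda>(M, x, \<phi>). size \<phi>)")
       apply (auto simp: less_Suc_eq_le intro!: trans_le_add1 size_mem_le_size_list nth_mem)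
  done

definition sat :: "('a, 'p, 'w, 'z) kripke_scheme \<Rightarrow> 'w \<Rightarrow> ('a, 'p) fm \<Rightarrow> bool" where
  "sat M w \<phi> = sat_gen (map_kripke (\<lambda>v. (v, [])) M) (w, []) \<phi>"

definition prod_upd :: "('a, 'p, 'w, 'z) kripke_scheme \<Rightarrow> ('a, 'p) fm list \<Rightarrow> ('a \<Rightarrow> (nat \<times> nat) set)
     \<Rightarrow> ('a, 'p, 'w \<times> nat option) kripke" where
  "prod_upd M pres R = prod_gen M (map (\<lambda>\<psi>. {v. sat M v \<psi>}) pres) R"

definition bisimulation :: "('a, 'p, 'w, 'z) kripke_scheme \<Rightarrow> ('a, 'p, 'u, 'y) kripke_scheme
     \<Rightarrow> ('w \<times> 'u) set \<Rightarrow> bool" where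
  "bisimulation M M' B \<longleftrightarrow> B \<noteq> {} \<and> B \<subseteq> worlds M \<times> worlds M'
   \<and> (\<forall>w w' p. (w, w') \<in> B \<longrightarrow> (w \<in> val M p \<longleftrightarrow> w' \<in> val M' p))
   \<and> (\<forall>a w w' v. (w, w') \<in> B \<and> (w, v) \<in> acc M a \<longrightarrow> (\<exists>v'. (w', v') \<in> acc M' a \<and> (v, v') \<in> B))
   \<and> (\<forall>a w w' v'. (w, w') \<in> B \<and> (w', v') \<in> acc M' a \<longrightarrow> (\<exists>v. (w, v) \<in> acc M a \<and> (v, v') \<in> B))
   \<and> (\<forall>w w' v. (w, w') \<in> B \<and> (v, w) \<in> yest M \<longrightarrow> (\<exists>v'. (v', w') \<in> yest M' \<and> (v, v') \<in> B))
   \<and> (\<forall>w w' v'. (w, w') \<in> B \<and> (v', w') \<in> yest M' \<longrightarrow> (\<exists>v. (v, w) \<in> yest M \<and> (v, v') \<in> B))"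

end

theory Submission
  imports Defs
begin

text \<open>The copy W \<times> {\<flat>} of M inside M \<oplus> U is closed under the agents' relations and under
  yesterday-predecessors, and on it these relations are exactly those of M; the event worlds
  (v, t) are only ever reached forward from (v, \<flat>). Hence neither the preconditions nor the
  event relations matter, and the embedding is a bisimulation for every product.\<close>

lemma prod_gen_None_in_worlds [simp]:
  "(v, None) \<in> worlds (prod_gen M T R) \<longleftrightarrow> v \<in> worlds M"
  by (simp add: prod_gen_def Let_def)

lemma prod_gen_None_in_val [simp]:
  "(v, None) \<in> val (prod_gen M T R) p \<longleftrightarrow> v \<in> worlds M \<and> v \<in> val M p"
  by (simp add: prod_gen_def Let_def)

lemma prod_gen_acc_from_None:
  assumes "wf_kripke M"
  shows "((v, None), y) \<in> acc (prod_gen M T R) a \<longleftrightarrow>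
    v \<in> worlds M \<and> (\<exists>v'. y = (v', None) \<and> (v, v') \<in> acc M a)"
  using assms by (auto simp: prod_gen_def Let_def wf_kripke_def)

lemma prod_gen_yest_into_None:
  assumes "wf_kripke M"
  shows "(y, (v, None)) \<in> yest (prod_gen M T R) \<longleftrightarrow>
    v \<in> worlds M \<and> (\<exists>v'. y = (v', None) \<and> (v', v) \<in> yest M)"
  using assms by (auto simp: prod_gen_def Let_def wf_kripke_def)

lemma bisimulation_prod_gen_None:
  assumes "wf_kripke M"
  shows "bisimulation M (prod_gen M T R) {(v, (v, None)) | v. v \<in> worlds M}"
proof -
  have acc_in: "\<And>a x y. (x, y) \<in> acc M a \<Longrightarrow> x \<in> worlds M \<and> y \<in> worlds M"
    and yest_in: "\<And>x y. (x, y) \<in> yest M \<Longrightarrow> x \<in> worlds M \<and> y \<in> worlds M"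
    and nonempty: "worlds M \<noteq> {}"
    using assms by (auto simp: wf_kripke_def)
  show ?thesis
    unfolding bisimulation_def
    using acc_in yest_in nonempty
      prod_gen_acc_from_None[OF assms] prod_gen_yest_into_None[OF assms]
    by auto
qed

theorem lemma27:
  fixes M :: "('a, 'p, 'w) kripke" and w :: 'w
    and pres :: "('a, 'p) fm list" and R :: "'a \<Rightarrow> (nat \<times> nat) set" and s :: nat
  assumes "finite (UNIV :: 'a set)" and "restricted M" and "w \<in> worlds M"
    and "wf_action pres R s"
    and "sat M w (pres ! s)"
  shows "bisimulation M (prod_upd M pres R) {(v, (v, None)) | v. v \<in> worlds M}"
proof -
  have "wf_kripke M"
    using \<open>restricted M\<close> by (simp add: restricted_def)
  then show ?thesis
    unfolding prod_upd_def by (rule bisimulation_prod_gen_None)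
qed

end
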